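(* Let $(X,x)$ be a pointed diffeological space and let $\mathcal{G}$ be a local generating category of $X$ at $x$. Then there is a natural epimorphism of vector spaces from $\operatorname{colim}(\mathcal{G} \hookrightarrow \mathcal{G}(X,x) \to \mathrm{Vect})$ to $T_x(X)$. Moreover, if $\mathcal{G}$ is a final subcategory of $\mathcal{G}(X,x)$, then this map is an isomorphism.
   Context: A diffeological space is a set $X$ together with, for every open subset $U$ of every $\mathbb{R}^n$, a set of functions $U\to X$ called plots, such that constant maps are plots, the composite of a plot with a smooth map $V\to U$ between open subsets of Euclidean spaces is a plot, and a function which is locally a plot (on an open cover) is a plot. Smooth maps are maps sending plots to plots. For a pointed diffeological space $(X,x)$, let $\mathcal{G}(X,x)$ be the category whose objects are the plots $p:U\to X$ with $U$ a connected open neighbourhood of $0$ in some $\mathbb{R}^n$ and $p(0)=x$, and whose morphisms from $p:U\to X$ to $q:V\to X$ are germs at $0$ of smooth maps $f:W\to V$ with $W$ an open neighbourhood of $0$ in $U$, $f(0)=0$ and $p|_W=q\circ f$. The functor $\mathcal{G}(X,x)\to \mathrm{Vect}$ (real vector spaces) sends $p:U\to X$ to $T_0(U)$ and $[f]$ to the differential $f_*:T_0(U)\to T_0(V)$; the internal tangent space $T_x(X)$ is the colimit of this functor. A local generating set of $X$ at $x$ is a subset $G$ of the objects of $\mathcal{G}(X,x)$ such that for every object $p$ there is some $q\in G$ and a morphism $p\to q$ in $\mathcal{G}(X,x)$; a local generating category of $X$ at $x$ is a subcategory of $\mathcal{G}(X,x)$ whose set of objects is a local generating set. A subcategory $\mathcal{G}$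 is final if for every object $p$ of $\mathcal{G}(X,x)$ the comma category $p/\mathcal{G}$ is non-empty and connected. *)

theory Defs
  imports "HOL-Analysis.Analysis" "HOL-Library.Function_Algebras"
begin

instantiation "fun" :: (type, real_vector) real_vector
begin
definition scaleR_fun :: "real \<Rightarrow> ('a \<Rightarrow> 'b) \<Rightarrow> 'a \<Rightarrow> 'b"
  where "scaleR_fun c f = (\<lambda>x. c *\<^sub>R f x)"
instance
  by standard (simp_all add: scaleR_fun_def fun_eq_iff scaleR_add_right scaleR_add_left)
end

text \<open>The topology on nat => real is the product topology (Function_Topology),
  whose restriction to euclid n is the usual Euclidean topology.\<close>

type_synonym pt = "nat \<Rightarrow> real"

definition euclid :: "nat \<Rightarrow> pt set" where
  "euclid n = {v. \<forall>i\<ge>n. v i = 0}"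

definition openR :: "nat \<Rightarrow> pt set \<Rightarrow> bool" where
  "openR n U \<longleftrightarrow> U \<subseteq> euclid n \<and> openin (top_of_set (euclid n)) U"

definition pd :: "nat \<Rightarrow> (pt \<Rightarrow> real) \<Rightarrow> pt \<Rightarrow> real" where
  "pd i g x = deriv (\<lambda>t. g (x(i := x i + t))) 0"

fun ipd :: "nat list \<Rightarrow> (pt \<Rightarrow> real) \<Rightarrow> pt \<Rightarrow> real" where
  "ipd [] g = g"
| "ipd (i # is) g = pd i (ipd is g)"

definition smooth_on :: "nat \<Rightarrow> pt set \<Rightarrow> (pt \<Rightarrow> real) \<Rightarrow> bool" where
  "smooth_on n U g \<longleftrightarrow>
     (\<forall>is. set is \<subseteq> {..<n} \<longrightarrow>
        continuous_on U (ipd is g) \<and>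
        (\<forall>i<n. \<forall>u\<in>U. (\<lambda>t. ipd is g (u(i := u i + t))) differentiable (at 0)))"

definition smooth_map :: "nat \<Rightarrow> pt set \<Rightarrow> nat \<Rightarrow> pt set \<Rightarrow> (pt \<Rightarrow> pt) \<Rightarrow> bool" where
  "smooth_map n U m V f \<longleftrightarrow> f ` U \<subseteq> V \<and> (\<forall>j<m. smooth_on n U (\<lambda>u. f u j))"

definition diff0 :: "nat \<Rightarrow> nat \<Rightarrow> (pt \<Rightarrow> pt) \<Rightarrow> pt \<Rightarrow> pt" where
  "diff0 n m f v = (\<lambda>j. if j < m then (\<Sum>i<n. pd i (\<lambda>u. f u j) 0 * v i) else 0)"

text \<open>plot n U p: p restricted to U is a plot U -> X (U open in R^n).
  Functions are total in HOL, so only the values on U matter (extensionality).\<close>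

definition diffeology :: "'a set \<Rightarrow> (nat \<Rightarrow> pt set \<Rightarrow> (pt \<Rightarrow> 'a) \<Rightarrow> bool) \<Rightarrow> bool" where
  "diffeology X plot \<longleftrightarrow>
     (\<forall>n U p. plot n U p \<longrightarrow> openR n U \<and> p ` U \<subseteq> X)
   \<and> (\<forall>n U p q. plot n U p \<and> (\<forall>u\<in>U. q u = p u) \<longrightarrow> plot n U q)
   \<and> (\<forall>n U x. openR n U \<and> x \<in> X \<longrightarrow> plot n U (\<lambda>_. x))
   \<and> (\<forall>n U p m V f. plot n U p \<and> openR m V \<and> smooth_map m V n U f \<longrightarrow> plot m V (p \<circ> f))
   \<and> (\<forall>n U p. openR n U \<and> p ` U \<subseteq> X \<and>
        (\<forall>u\<in>U. \<exists>W. openR n W \<and> u \<in> W \<and> W \<subseteq> U \<and> plot n W p) \<longrightarrow> plot n U p)"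

type_synonym 'a gobj = "nat \<times> pt set \<times> (pt \<Rightarrow> 'a)"

definition Gobj :: "(nat \<Rightarrow> pt set \<Rightarrow> (pt \<Rightarrow> 'a) \<Rightarrow> bool) \<Rightarrow> 'a \<Rightarrow> 'a gobj set" where
  "Gobj plot x = {(n, U, p). openR n U \<and> connected U \<and> 0 \<in> U \<and> plot n U p \<and> p 0 = x}"

definition dimo :: "'a gobj \<Rightarrow> nat" where "dimo P = fst P"
definition domo :: "'a gobj \<Rightarrow> pt set" where "domo P = fst (snd P)"
definition plto :: "'a gobj \<Rightarrow> pt \<Rightarrow> 'a" where "plto P = snd (snd P)"

text \<open>(W, f) represents a morphism P -> Q (a germ at 0 of f).\<close>
definition is_mor :: "'a gobj \<Rightarrow> 'a gobj \<Rightarrow> pt set \<Rightarrow> (pt \<Rightarrow> pt) \<Rightarrow> bool" where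
  "is_mor P Q W f \<longleftrightarrow> openR (dimo P) W \<and> 0 \<in> W \<and> W \<subseteq> domo P \<and>
     smooth_map (dimo P) W (dimo Q) (domo Q) f \<and> f 0 = 0 \<and>
     (\<forall>w\<in>W. plto P w = plto Q (f w))"

definition germ_eq :: "nat \<Rightarrow> pt set \<Rightarrow> (pt \<Rightarrow> 'b) \<Rightarrow> pt set \<Rightarrow> (pt \<Rightarrow> 'b) \<Rightarrow> bool" where
  "germ_eq n W f W' f' \<longleftrightarrow> (\<exists>W''. openR n W'' \<and> 0 \<in> W'' \<and> W'' \<subseteq> W \<inter> W' \<and> (\<forall>w\<in>W''. f w = f' w))"

definition Gmor :: "(nat \<Rightarrow> pt set \<Rightarrow> (pt \<Rightarrow> 'a) \<Rightarrow> bool) \<Rightarrow> 'a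
    \<Rightarrow> 'a gobj \<Rightarrow> 'a gobj \<Rightarrow> pt set \<Rightarrow> (pt \<Rightarrow> pt) \<Rightarrow> bool" where
  "Gmor plot x P Q W f \<longleftrightarrow> P \<in> Gobj plot x \<and> Q \<in> Gobj plot x \<and> is_mor P Q W f"

text \<open>A subcategory: a set of objects Gob and a set of morphisms M (a set of germs,
  given by the predicate M on representatives, closed under change of representative),
  containing identities and closed under composition.\<close>
definition subcategory :: "(nat \<Rightarrow> pt set \<Rightarrow> (pt \<Rightarrow> 'a) \<Rightarrow> bool) \<Rightarrow> 'a \<Rightarrow> 'a gobj set
    \<Rightarrow> ('a gobj \<Rightarrow> 'a gobj \<Rightarrow> pt set \<Rightarrow> (pt \<Rightarrow> pt) \<Rightarrow> bool) \<Rightarrow> bool" where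
  "subcategory plot x Gob M \<longleftrightarrow>
     Gob \<subseteq> Gobj plot x
   \<and> (\<forall>P Q W f. M P Q W f \<longrightarrow> P \<in> Gob \<and> Q \<in> Gob \<and> is_mor P Q W f)
   \<and> (\<forall>P Q W f W' f'. M P Q W f \<and> is_mor P Q W' f' \<and> germ_eq (dimo P) W f W' f' \<longrightarrow> M P Q W' f')
   \<and> (\<forall>P\<in>Gob. M P P (domo P) id)
   \<and> (\<forall>P Q R W f W' g. M P Q W f \<and> M Q R W' g \<longrightarrow> M P R (W \<inter> f -` W') (g \<circ> f))"

definition local_generating_set :: "(nat \<Rightarrow> pt set \<Rightarrow> (pt \<Rightarrow> 'a) \<Rightarrow> bool) \<Rightarrow> 'a \<Rightarrow> 'a gobj set \<Rightarrow> bool" where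
  "local_generating_set plot x Gob \<longleftrightarrow>
     Gob \<subseteq> Gobj plot x \<and> (\<forall>P\<in>Gobj plot x. \<exists>Q\<in>Gob. \<exists>W f. Gmor plot x P Q W f)"

definition local_generating_category :: "(nat \<Rightarrow> pt set \<Rightarrow> (pt \<Rightarrow> 'a) \<Rightarrow> bool) \<Rightarrow> 'a \<Rightarrow> 'a gobj set
    \<Rightarrow> ('a gobj \<Rightarrow> 'a gobj \<Rightarrow> pt set \<Rightarrow> (pt \<Rightarrow> pt) \<Rightarrow> bool) \<Rightarrow> bool" where
  "local_generating_category plot x Gob M \<longleftrightarrow>
     subcategory plot x Gob M \<and> local_generating_set plot x Gob"

text \<open>Comma category P/G: objects (Q,[f]) with Q in G and [f] : P -> Q in G(X,x);
  arrows (Q,[f]) -> (Q',[f']) are [g] in G with [g] o [f] = [f'].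
  Objects are taken as representatives; representatives of one germ are
  connected through the identity, so connectedness is unaffected.\<close>
definition comma_obj :: "(nat \<Rightarrow> pt set \<Rightarrow> (pt \<Rightarrow> 'a) \<Rightarrow> bool) \<Rightarrow> 'a \<Rightarrow> 'a gobj set \<Rightarrow> 'a gobj
    \<Rightarrow> ('a gobj \<times> pt set \<times> (pt \<Rightarrow> pt)) set" where
  "comma_obj plot x Gob P = {(Q, W, f). Q \<in> Gob \<and> Gmor plot x P Q W f}"

definition comma_arr :: "(nat \<Rightarrow> pt set \<Rightarrow> (pt \<Rightarrow> 'a) \<Rightarrow> bool) \<Rightarrow> 'a \<Rightarrow> 'a gobj set
    \<Rightarrow> ('a gobj \<Rightarrow> 'a gobj \<Rightarrow> pt set \<Rightarrow> (pt \<Rightarrow> pt) \<Rightarrow> bool) \<Rightarrow> 'a gobj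
    \<Rightarrow> (('a gobj \<times> pt set \<times> (pt \<Rightarrow> pt)) \<times> ('a gobj \<times> pt set \<times> (pt \<Rightarrow> pt))) set" where
  "comma_arr plot x Gob M P = {((Q, W, f), (Q', W', f')).
      (Q, W, f) \<in> comma_obj plot x Gob P \<and> (Q', W', f') \<in> comma_obj plot x Gob P \<and>
      (\<exists>Wg g. M Q Q' Wg g \<and> germ_eq (dimo P) (W \<inter> f -` Wg) (g \<circ> f) W' f')}"

definition final_subcategory :: "(nat \<Rightarrow> pt set \<Rightarrow> (pt \<Rightarrow> 'a) \<Rightarrow> bool) \<Rightarrow> 'a \<Rightarrow> 'a gobj set
    \<Rightarrow> ('a gobj \<Rightarrow> 'a gobj \<Rightarrow> pt set \<Rightarrow> (pt \<Rightarrow> pt) \<Rightarrow> bool) \<Rightarrow> bool" where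
  "final_subcategory plot x Gob M \<longleftrightarrow>
     (\<forall>P\<in>Gobj plot x.
        comma_obj plot x Gob P \<noteq> {} \<and>
        (\<forall>a\<in>comma_obj plot x Gob P. \<forall>b\<in>comma_obj plot x Gob P.
           (a, b) \<in> (comma_arr plot x Gob M P \<union> (comma_arr plot x Gob M P)\<inverse>)\<^sup>*))"

text \<open>For objects I and morphisms M, the colimit of P |-> T_0(dom P) = R^(dim P),
  [f] |-> f_* : the direct sum of the R^(dim P) modulo the subspace spanned by
  inj Q (f_* v) - inj P v.\<close>

definition inj_ds :: "'a gobj \<Rightarrow> pt \<Rightarrow> 'a gobj \<Rightarrow> pt" where
  "inj_ds P v = (\<lambda>Q. if Q = P then v else 0)"

definition dsum :: "'a gobj set \<Rightarrow> ('a gobj \<Rightarrow> pt) set" where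
  "dsum I = {s. finite {P. s P \<noteq> 0} \<and> (\<forall>P. s P \<noteq> 0 \<longrightarrow> P \<in> I) \<and> (\<forall>P\<in>I. s P \<in> euclid (dimo P))}"

definition rels :: "('a gobj \<Rightarrow> 'a gobj \<Rightarrow> pt set \<Rightarrow> (pt \<Rightarrow> pt) \<Rightarrow> bool) \<Rightarrow> ('a gobj \<Rightarrow> pt) set" where
  "rels M = span {inj_ds Q (diff0 (dimo P) (dimo Q) f v) - inj_ds P v | P Q W f v.
                    M P Q W f \<and> v \<in> euclid (dimo P)}"

definition coset :: "'b::ab_group_add \<Rightarrow> 'b set \<Rightarrow> 'b set" where
  "coset s R = {s + r | r. r \<in> R}"

definition colim :: "'a gobj set \<Rightarrow> ('a gobj \<Rightarrow> 'a gobj \<Rightarrow> pt set \<Rightarrow> (pt \<Rightarrow> pt) \<Rightarrow> bool)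
    \<Rightarrow> ('a gobj \<Rightarrow> pt) set set" where
  "colim I M = (\<lambda>s. coset s (rels M)) ` dsum I"

definition colim_in :: "('a gobj \<Rightarrow> 'a gobj \<Rightarrow> pt set \<Rightarrow> (pt \<Rightarrow> pt) \<Rightarrow> bool) \<Rightarrow> 'a gobj \<Rightarrow> pt
    \<Rightarrow> ('a gobj \<Rightarrow> pt) set" where
  "colim_in M P v = coset (inj_ds P v) (rels M)"

definition qplus :: "'b::real_vector set \<Rightarrow> 'b set \<Rightarrow> 'b set \<Rightarrow> 'b set" where
  "qplus R C D = coset ((SOME c. c \<in> C) + (SOME d. d \<in> D)) R"

definition qscale :: "'b::real_vector set \<Rightarrow> real \<Rightarrow> 'b set \<Rightarrow> 'b set" where
  "qscale R a C = coset (a *\<^sub>R (SOME c. c \<in> C)) R"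

definition qlinear :: "'b::real_vector set \<Rightarrow> 'c::real_vector set \<Rightarrow> 'b set set
    \<Rightarrow> ('b set \<Rightarrow> 'c set) \<Rightarrow> bool" where
  "qlinear R S A \<phi> \<longleftrightarrow>
     (\<forall>C\<in>A. \<forall>D\<in>A. \<phi> (qplus R C D) = qplus S (\<phi> C) (\<phi> D)) \<and>
     (\<forall>a. \<forall>C\<in>A. \<phi> (qscale R a C) = qscale S a (\<phi> C))"

definition tangent_space :: "(nat \<Rightarrow> pt set \<Rightarrow> (pt \<Rightarrow> 'a) \<Rightarrow> bool) \<Rightarrow> 'a \<Rightarrow> ('a gobj \<Rightarrow> pt) set set" where
  "tangent_space plot x = colim (Gobj plot x) (Gmor plot x)"

end

theory Submission
  imports Defs
begin

text \<open>
  A germ \<open>[f]\<close> acts on tangent vectors at \<open>0\<close> through its Jacobian, and the chain rule makes this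
  functorial; for the coordinatewise notion of smoothness used here the chain rule is derived from the
  mean value theorem along coordinate segments, and composites of smooth maps are smooth by induction
  over the classes \<open>C\<^sup>k\<close>.

  The comparison map sends the class of \<open>s\<close> in the direct sum of the \<open>T\<^sub>0 P\<close>, \<open>P \<in> \<G>\<close>, to its
  class in the direct sum over all of \<open>G(X,x)\<close>. It is onto because every plot \<open>P\<close> has a morphism
  \<open>f : P \<rightarrow> Q\<close> into the generating set, so \<open>v \<in> T\<^sub>0 P\<close> is congruent to \<open>f\<^sub>* v \<in> T\<^sub>0 Q\<close>. If \<open>\<G>\<close> is final, choose for every \<open>P\<close> an object
  \<open>(Q, [f])\<close> of \<open>P/\<G>\<close> and send \<open>v\<close> to \<open>f\<^sub>* v\<close>: since \<open>P/\<G>\<close> is connected, the choice only matters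
  modulo the relations of \<open>\<G>\<close>, so this map carries the relations of \<open>G(X,x)\<close> into those of \<open>\<G>\<close>
  and inverts the comparison map.

  Only the categorical structure of \<open>G(X,x)\<close> enters.
\<close>

section \<open>Cubes and the topology of \<open>euclid n\<close>\<close>

definition cube :: "nat \<Rightarrow> pt \<Rightarrow> real \<Rightarrow> pt set" where
  "cube n c d = {y. \<forall>j<n. \<bar>y j - c j\<bar> < d}"

lemma open_cube: "open (cube n c d)"
proof -
  have "cube n c d = {f. \<forall>i\<in>{..<n}. f (id i) \<in> ball (c i) d}"
    by (auto simp: cube_def dist_real_def ball_def abs_minus_commute)
  then show ?thesis using product_topology_basis'[of "{..<n}" "\<lambda>i. ball (c i) d" id] by simp
qed

lemma centre_in_cube: "d > 0 \<Longrightarrow> c \<in> cube n c d"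
  by (simp add: cube_def)

lemma open_contains_cube:
  assumes "open S" "c \<in> S" "c \<in> euclid n"
  shows "\<exists>d>0. cube n c d \<inter> euclid n \<subseteq> S"
proof -
  have "openin (product_topology (\<lambda>i. euclidean) UNIV) S" using assms(1) by (simp add: open_fun_def)
  from product_topology_open_contains_basis[OF this assms(2)]
  obtain X where X: "c \<in> (\<Pi>\<^sub>E i\<in>UNIV. X i)" "\<And>i. open (X i)" "finite {i. X i \<noteq> UNIV}"
     "(\<Pi>\<^sub>E i\<in>UNIV. X i) \<subseteq> S" by auto
  define I where "I = {i. X i \<noteq> UNIV}"
  have "\<forall>i\<in>I. \<exists>e>0. ball (c i) e \<subseteq> X i"
    using X(1,2) by (meson PiE_E UNIV_I open_contains_ball)
  then obtain e where e: "\<forall>i\<in>I. e i > 0 \<and> ball (c i) (e i) \<subseteq> X i" by metis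
  define d where "d = Min (insert 1 (e ` I))"
  have fin: "finite (insert 1 (e ` I))" using X(3) I_def by simp
  have d_pos: "d > 0" unfolding d_def using fin e by (subst Min_gr_iff) auto
  have d_le: "d \<le> e i" if "i \<in> I" for i unfolding d_def using fin that by simp
  have "y i \<in> X i" if y: "y \<in> cube n c d \<inter> euclid n" for y i
  proof (cases "i \<in> I")
    case True
    show ?thesis
    proof (cases "i < n")
      case True
      then have "\<bar>y i - c i\<bar> < e i" using y d_le[OF \<open>i \<in> I\<close>] by (auto simp: cube_def)
      then have "y i \<in> ball (c i) (e i)" by (simp add: dist_real_def)
      then show ?thesis using e \<open>i \<in> I\<close> by blast
    next
      case False
      then have "y i = c i" using y assms(3) by (auto simp: euclid_def)
      then show ?thesis using X(1) by auto
    qed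
  qed (simp add: I_def)
  then have "cube n c d \<inter> euclid n \<subseteq> (\<Pi>\<^sub>E i\<in>UNIV. X i)" by auto
  then show ?thesis using X(4) d_pos by blast
qed

lemma openR_iff_cube:
  "openR n S \<longleftrightarrow> S \<subseteq> euclid n \<and> (\<forall>c\<in>S. \<exists>d>0. cube n c d \<inter> euclid n \<subseteq> S)"
proof
  assume "openR n S"
  then obtain T where T: "open T" "S = euclid n \<inter> T" "S \<subseteq> euclid n"
    by (auto simp: openR_def openin_open)
  show "S \<subseteq> euclid n \<and> (\<forall>c\<in>S. \<exists>d>0. cube n c d \<inter> euclid n \<subseteq> S)"
  proof (intro conjI ballI)
    fix c assume "c \<in> S"
    then obtain d where "d > 0" "cube n c d \<inter> euclid n \<subseteq> T" using open_contains_cube[OF T(1)] T by blast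
    then show "\<exists>d>0. cube n c d \<inter> euclid n \<subseteq> S" using T by blast
  qed (use T in auto)
next
  assume S: "S \<subseteq> euclid n \<and> (\<forall>c\<in>S. \<exists>d>0. cube n c d \<inter> euclid n \<subseteq> S)"
  then obtain d where d: "\<forall>c\<in>S. d c > 0 \<and> cube n c (d c) \<inter> euclid n \<subseteq> S" by metis
  define T where "T = (\<Union>c\<in>S. cube n c (d c))"
  have "open T" unfolding T_def using open_cube by blast
  moreover have "S = euclid n \<inter> T" unfolding T_def using S d centre_in_cube by blast
  ultimately show "openR n S" using S by (auto simp: openR_def openin_open)
qed

lemma continuous_on_iff_cube:
  fixes h :: "pt \<Rightarrow> 'b::metric_space"
  assumes "S \<subseteq> euclid n"
  shows "continuous_on S h \<longleftrightarrow>
    (\<forall>c\<in>S. \<forall>e>0. \<exists>d>0. \<forall>y\<in>S. y \<in> cube n c d \<longrightarrow> dist (h y) (h c) < e)"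
proof
  assume h: "continuous_on S h"
  show "\<forall>c\<in>S. \<forall>e>0. \<exists>d>0. \<forall>y\<in>S. y \<in> cube n c d \<longrightarrow> dist (h y) (h c) < e"
  proof (intro ballI allI impI)
    fix c e assume "c \<in> S" "(e::real) > 0"
    then obtain A where A: "open A" "c \<in> A" "\<forall>y\<in>S. y \<in> A \<longrightarrow> h y \<in> ball (h c) e"
      using h unfolding continuous_on_topological by (metis centre_in_ball open_ball)
    obtain d where "d > 0" "cube n c d \<inter> euclid n \<subseteq> A"
      using open_contains_cube[OF A(1,2)] assms \<open>c \<in> S\<close> by blast
    then show "\<exists>d>0. \<forall>y\<in>S. y \<in> cube n c d \<longrightarrow> dist (h y) (h c) < e"
      using A(3) assms by (metis IntI dist_commute mem_ball subsetD)
  qed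
next
  assume cube_cont: "\<forall>c\<in>S. \<forall>e>0. \<exists>d>0. \<forall>y\<in>S. y \<in> cube n c d \<longrightarrow> dist (h y) (h c) < e"
  show "continuous_on S h" unfolding continuous_on_topological
  proof (intro ballI allI impI)
    fix c B assume "c \<in> S" "open B" "h c \<in> B"
    then obtain e where "e > 0" "ball (h c) e \<subseteq> B" using open_contains_ball by blast
    then obtain d where "d > 0" "\<forall>y\<in>S. y \<in> cube n c d \<longrightarrow> dist (h y) (h c) < e"
      using cube_cont \<open>c \<in> S\<close> by blast
    then show "\<exists>A. open A \<and> c \<in> A \<and> (\<forall>y\<in>S. y \<in> A \<longrightarrow> h y \<in> B)"
      using \<open>ball (h c) e \<subseteq> B\<close> open_cube centre_in_cube by (metis dist_commute mem_ball subsetD)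
  qed
qed

lemma euclid_fun_upd: "u \<in> euclid n \<Longrightarrow> i < n \<Longrightarrow> u(i := a) \<in> euclid n"
  by (auto simp: euclid_def)

lemma eventually_coordinate_line_in:
  assumes "openR n U" "u \<in> U" "i < n"
  shows "eventually (\<lambda>t. u(i := u i + t) \<in> U) (nhds 0)"
proof -
  obtain d where d: "d > 0" "cube n u d \<inter> euclid n \<subseteq> U" "U \<subseteq> euclid n"
    using assms openR_iff_cube by metis
  have "u(i := u i + t) \<in> U" if "dist t 0 < d" for t
  proof -
    have "u(i := u i + t) \<in> cube n u d" using that by (auto simp: cube_def)
    moreover have "u(i := u i + t) \<in> euclid n" using euclid_fun_upd assms d by blast
    ultimately show ?thesis using d by blast
  qed
  then show ?thesis unfolding eventually_nhds_metric using d by blast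
qed

section \<open>Partial derivatives\<close>

lemma pd_cong:
  assumes "openR n U" "u \<in> U" "i < n" "\<forall>y\<in>U. h y = h' y"
  shows "pd i h u = pd i h' u"
proof -
  have "eventually (\<lambda>t. h (u(i := u i + t)) = h' (u(i := u i + t))) (nhds 0)"
    using eventually_coordinate_line_in[OF assms(1-3)] by (rule eventually_mono) (simp add: assms(4))
  then show ?thesis unfolding pd_def by (intro deriv_cong_ev) simp_all
qed

lemma differentiable_coordinate_line_cong:
  fixes h h' :: "pt \<Rightarrow> real"
  assumes "openR n U" "u \<in> U" "i < n" "\<forall>y\<in>U. h y = h' y"
    and "(\<lambda>t. h (u(i := u i + t))) differentiable at 0"
  shows "(\<lambda>t. h' (u(i := u i + t))) differentiable at 0"
proof -
  have "eventually (\<lambda>t. h (u(i := u i + t)) = h' (u(i := u i + t))) (nhds 0)"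
    using eventually_coordinate_line_in[OF assms(1-3)] by (rule eventually_mono) (simp add: assms(4))
  moreover obtain D where "((\<lambda>t. h (u(i := u i + t))) has_real_derivative D) (at 0)"
    using assms(5) unfolding real_differentiable_def by blast
  ultimately have "((\<lambda>t. h' (u(i := u i + t))) has_real_derivative D) (at 0)"
    using DERIV_cong_ev[of 0 0 "\<lambda>t. h (u(i := u i + t))" "\<lambda>t. h' (u(i := u i + t))" D D] by simp
  then show ?thesis unfolding real_differentiable_def by blast
qed

lemma has_real_derivative_pd:
  assumes "(\<lambda>t. h (u(i := u i + t))) differentiable at 0"
  shows "((\<lambda>t. h (u(i := u i + t))) has_real_derivative pd i h u) (at 0)"
  using assms unfolding pd_def by (simp add: DERIV_deriv_iff_real_differentiable)

lemma MVT_symmetric: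
  fixes \<phi> \<phi>' :: "real \<Rightarrow> real"
  assumes "\<And>s. \<bar>s\<bar> \<le> \<bar>\<delta>\<bar> \<Longrightarrow> (\<phi> has_real_derivative \<phi>' s) (at s)"
  shows "\<exists>\<xi>. \<bar>\<xi>\<bar> \<le> \<bar>\<delta>\<bar> \<and> \<phi> \<delta> - \<phi> 0 = \<delta> * \<phi>' \<xi>"
proof -
  consider "\<delta> = 0" | "0 < \<delta>" | "\<delta> < 0" by linarith
  then show ?thesis
  proof cases
    case 2
    then obtain z where "0 < z" "z < \<delta>" "\<phi> \<delta> - \<phi> 0 = (\<delta> - 0) * \<phi>' z"
      using MVT2[of 0 \<delta> \<phi> \<phi>'] assms by force
    then show ?thesis by (intro exI[of _ z]) auto
  next
    case 3
    then obtain z where "\<delta> < z" "z < 0" "\<phi> 0 - \<phi> \<delta> = (0 - \<delta>) * \<phi>' z"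
      using MVT2[of \<delta> 0 \<phi> \<phi>'] assms by force
    then show ?thesis by (intro exI[of _ z]) (auto simp: algebra_simps)
  qed auto
qed

lemma MVT_coordinate_line:
  fixes g :: "pt \<Rightarrow> real"
  assumes line: "\<And>s. \<bar>s\<bar> \<le> \<bar>\<delta>\<bar> \<Longrightarrow> w(k := w k + s) \<in> U"
    and g: "\<forall>y\<in>U. (\<lambda>t. g (y(k := y k + t))) differentiable at 0"
  shows "\<exists>\<xi>. \<bar>\<xi>\<bar> \<le> \<bar>\<delta>\<bar> \<and> g (w(k := w k + \<delta>)) - g w = \<delta> * pd k g (w(k := w k + \<xi>))"
proof -
  have "((\<lambda>s. g (w(k := w k + s))) has_real_derivative pd k g (w(k := w k + s))) (at s)"
    if "\<bar>s\<bar> \<le> \<bar>\<delta>\<bar>" for s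
  proof -
    define y where "y = w(k := w k + s)"
    have "((\<lambda>t. g (y(k := y k + t))) has_real_derivative pd k g y) (at 0)"
      using has_real_derivative_pd g line[OF that] y_def by blast
    moreover have "(\<lambda>t. g (y(k := y k + t))) = (\<lambda>t. g (w(k := w k + (t + s))))"
      by (simp add: y_def add_ac)
    ultimately show ?thesis
      using DERIV_shift[of "\<lambda>s. g (w(k := w k + s))" "pd k g y" 0 s] y_def by simp
  qed
  from MVT_symmetric[OF this] show ?thesis by simp
qed

text \<open>Moving from \<open>c\<close> to \<open>y\<close> one coordinate at a time and applying the mean value
  theorem on each coordinate segment; all intermediate points stay in the box spanned by
  \<open>c\<close> and \<open>y\<close>.\<close>
lemma cube_mean_value:
  fixes g :: "pt \<Rightarrow> real"
  assumes cube: "cube n c d \<inter> euclid n \<subseteq> U" and c: "c \<in> euclid n"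
    and y: "y \<in> cube n c d" "y \<in> euclid n"
    and g: "\<forall>k<n. \<forall>u\<in>U. (\<lambda>t. g (u(k := u k + t))) differentiable at 0"
  shows "\<exists>p. (\<forall>k<n. p k \<in> U \<and> (\<forall>j<n. \<bar>p k j - c j\<bar> \<le> \<bar>y j - c j\<bar>))
           \<and> g y - g c = (\<Sum>k<n. (y k - c k) * pd k g (p k))"
proof -
  define z where "z k = (\<lambda>j. if j < k then c j else y j)" for k
  have z0: "z 0 = y" by (simp add: z_def)
  have zn: "z n = c" using c y(2) by (auto simp: z_def euclid_def fun_eq_iff)
  have between_in_U: "w \<in> U" if "w \<in> euclid n" "\<forall>j<n. \<bar>w j - c j\<bar> \<le> \<bar>y j - c j\<bar>" for w
  proof -
    have "w \<in> cube n c d" using that(2) y(1) by (fastforce simp: cube_def)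
    then show ?thesis using cube that(1) by blast
  qed
  have step: "\<exists>p. p \<in> U \<and> (\<forall>j<n. \<bar>p j - c j\<bar> \<le> \<bar>y j - c j\<bar>)
                  \<and> g (z k) - g (z (Suc k)) = (y k - c k) * pd k g p" if k: "k < n" for k
  proof -
    define w where "w = z (Suc k)"
    have w_between: "\<forall>j<n. \<bar>(w(k := w k + s)) j - c j\<bar> \<le> \<bar>y j - c j\<bar>"
      if "\<bar>s\<bar> \<le> \<bar>y k - c k\<bar>" for s
      using that by (auto simp: w_def z_def)
    have w_euclid: "w(k := w k + s) \<in> euclid n" for s
      using c y(2) k by (auto simp: w_def z_def euclid_def)
    obtain \<xi> where \<xi>: "\<bar>\<xi>\<bar> \<le> \<bar>y k - c k\<bar>"
        "g (w(k := w k + (y k - c k))) - g w = (y k - c k) * pd k g (w(k := w k + \<xi>))"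
      using MVT_coordinate_line[of "y k - c k" w k U g] g k between_in_U w_between w_euclid by blast
    have "w(k := w k + (y k - c k)) = z k" by (auto simp: w_def z_def fun_eq_iff)
    then show ?thesis
      using \<xi> between_in_U[OF w_euclid w_between[OF \<xi>(1)]] w_between[OF \<xi>(1)] w_def by metis
  qed
  then obtain p where p: "\<forall>k<n. p k \<in> U \<and> (\<forall>j<n. \<bar>p k j - c j\<bar> \<le> \<bar>y j - c j\<bar>)
                             \<and> g (z k) - g (z (Suc k)) = (y k - c k) * pd k g (p k)"
    by metis
  have "g y - g c = (\<Sum>k<n. g (z k) - g (z (Suc k)))"
    using sum_lessThan_telescope'[of "\<lambda>k. g (z k)" n] z0 zn by simp
  also have "\<dots> = (\<Sum>k<n. (y k - c k) * pd k g (p k))"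
    using p by (intro sum.cong) auto
  finally show ?thesis using p by blast
qed

lemma eventually_in_cube:
  assumes "\<forall>j<n. ((\<lambda>t. \<gamma> t j) \<longlongrightarrow> c j) F" "e > 0"
  shows "eventually (\<lambda>t. \<gamma> t \<in> cube n c e) F"
proof -
  have "\<forall>j\<in>{..<n}. eventually (\<lambda>t. \<bar>\<gamma> t j - c j\<bar> < e) F"
  proof
    fix j assume "j \<in> {..<n}"
    then have "eventually (\<lambda>t. dist (\<gamma> t j) (c j) < e) F" using assms by (intro tendstoD) auto
    then show "eventually (\<lambda>t. \<bar>\<gamma> t j - c j\<bar> < e) F" by (simp add: dist_real_def)
  qed
  then have "eventually (\<lambda>t. \<forall>j\<in>{..<n}. \<bar>\<gamma> t j - c j\<bar> < e) F"
    by (rule eventually_ball_finite[OF finite_lessThan])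
  then show ?thesis by (rule eventually_mono) (simp add: cube_def)
qed

lemma chain_rule_curve:
  fixes g :: "pt \<Rightarrow> real" and \<gamma> :: "real \<Rightarrow> pt"
  assumes U: "openR n U" and c: "c \<in> U"
    and g_diff: "\<forall>j<n. \<forall>y\<in>U. (\<lambda>t. g (y(j := y j + t))) differentiable at 0"
    and g_cont: "\<forall>j<n. continuous_on U (pd j g)"
    and \<gamma>: "\<forall>j<n. ((\<lambda>t. \<gamma> t j) has_real_derivative D j) (at 0)"
    and \<gamma>0: "\<gamma> 0 = c"
    and \<gamma>_in: "eventually (\<lambda>t. \<gamma> t \<in> U) (at 0)"
  shows "((\<lambda>t. g (\<gamma> t)) has_real_derivative (\<Sum>j<n. pd j g c * D j)) (at 0)"
proof -
  obtain d where d: "d > 0" "cube n c d \<inter> euclid n \<subseteq> U" and U_euclid: "U \<subseteq> euclid n"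
    using U c openR_iff_cube by metis
  have \<gamma>_lim: "\<forall>j<n. ((\<lambda>t. \<gamma> t j) \<longlongrightarrow> c j) (at 0)"
    using \<gamma> \<gamma>0 DERIV_isCont isCont_def by fastforce
  define good where "good t \<longleftrightarrow> \<gamma> t \<in> U \<and> \<gamma> t \<in> cube n c d" for t
  have ev_good: "eventually good (at 0)"
    unfolding good_def using \<gamma>_in eventually_in_cube[OF \<gamma>_lim d(1)] by (rule eventually_conj)
  define Mv where "Mv t p \<longleftrightarrow> (\<forall>k<n. p k \<in> U \<and> (\<forall>j<n. \<bar>p k j - c j\<bar> \<le> \<bar>\<gamma> t j - c j\<bar>))
           \<and> g (\<gamma> t) - g c = (\<Sum>k<n. (\<gamma> t k - c k) * pd k g (p k))" for t p
  define p where "p t = (SOME p. Mv t p)" for t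
  have p: "Mv t (p t)" if "good t" for t
  proof -
    have "\<exists>q. Mv t q"
      unfolding Mv_def using cube_mean_value[OF d(2)] that c U_euclid g_diff by (auto simp: good_def)
    then show ?thesis unfolding p_def by (rule someI_ex)
  qed
  have pd_lim: "((\<lambda>t. pd k g (p t k)) \<longlongrightarrow> pd k g c) (at 0)" if k: "k < n" for k
  proof (rule tendstoI)
    fix \<epsilon> :: real assume "\<epsilon> > 0"
    then obtain e where e: "e > 0" "\<forall>y\<in>U. y \<in> cube n c e \<longrightarrow> dist (pd k g y) (pd k g c) < \<epsilon>"
      using g_cont k continuous_on_iff_cube[OF U_euclid] c by metis
    show "eventually (\<lambda>t. dist (pd k g (p t k)) (pd k g c) < \<epsilon>) (at 0)"
      using eventually_conj[OF ev_good eventually_in_cube[OF \<gamma>_lim e(1)]]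
    proof (rule eventually_mono)
      fix t assume "good t \<and> \<gamma> t \<in> cube n c e"
      then have "p t k \<in> U" "p t k \<in> cube n c e"
        using p[of t] k unfolding Mv_def cube_def by (fastforce+)
      then show "dist (pd k g (p t k)) (pd k g c) < \<epsilon>" using e by blast
    qed
  qed
  have quotient_lim: "((\<lambda>t. (\<gamma> t k - c k) / (t - 0)) \<longlongrightarrow> D k) (at 0)" if "k < n" for k
    using \<gamma> that \<gamma>0 unfolding has_field_derivative_iff by auto
  have "((\<lambda>t. \<Sum>k<n. pd k g (p t k) * ((\<gamma> t k - c k) / (t - 0))) \<longlongrightarrow> (\<Sum>k<n. pd k g c * D k)) (at 0)"
    using pd_lim quotient_lim by (intro tendsto_sum tendsto_mult) auto
  moreover have "eventually (\<lambda>t. (\<Sum>k<n. pd k g (p t k) * ((\<gamma> t k - c k) / (t - 0)))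
      = (g (\<gamma> t) - g (\<gamma> 0)) / (t - 0)) (at 0)"
  proof (rule eventually_mono[OF ev_good])
    fix t assume "good t"
    then have "g (\<gamma> t) - g (\<gamma> 0) = (\<Sum>k<n. (\<gamma> t k - c k) * pd k g (p t k))"
      using p \<gamma>0 unfolding Mv_def by simp
    then show "(\<Sum>k<n. pd k g (p t k) * ((\<gamma> t k - c k) / (t - 0))) = (g (\<gamma> t) - g (\<gamma> 0)) / (t - 0)"
      by (simp add: sum_divide_distrib mult.commute)
  qed
  ultimately have "((\<lambda>t. (g (\<gamma> t) - g (\<gamma> 0)) / (t - 0)) \<longlongrightarrow> (\<Sum>k<n. pd k g c * D k)) (at 0)"
    by (rule Lim_transform_eventually)
  then show ?thesis unfolding has_field_derivative_iff .
qed

section \<open>Functions of class \<open>C\<^sup>k\<close> and composition of smooth maps\<close>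

text \<open>\<open>smooth_on\<close> quantifies over all words of partial derivatives at once; the hierarchy
  \<open>C\<^sup>k\<close> is what the proof that composites are smooth inducts on.\<close>
fun Ck_on :: "nat \<Rightarrow> pt set \<Rightarrow> nat \<Rightarrow> (pt \<Rightarrow> real) \<Rightarrow> bool" where
  "Ck_on n U 0 h = continuous_on U h"
| "Ck_on n U (Suc k) h = (continuous_on U h \<and> (\<forall>i<n. \<forall>u\<in>U. (\<lambda>t. h (u(i := u i + t))) differentiable at 0)
      \<and> (\<forall>i<n. Ck_on n U k (pd i h)))"

lemma ipd_snoc: "ipd (xs @ [i]) g = ipd xs (pd i g)"
  by (induction xs) auto

lemma smooth_onD:
  "smooth_on n U h \<Longrightarrow> continuous_on U h \<and> (\<forall>i<n. \<forall>u\<in>U. (\<lambda>t. h (u(i := u i + t))) differentiable at 0)"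
  unfolding smooth_on_def by (drule spec[of _ "[]"]) simp

lemma smooth_on_pd:
  assumes "smooth_on n U h" "i < n"
  shows "smooth_on n U (pd i h)"
  unfolding smooth_on_def
proof (intro allI impI)
  fix xs :: "nat list" assume "set xs \<subseteq> {..<n}"
  then have "set (xs @ [i]) \<subseteq> {..<n}" using assms(2) by auto
  then show "continuous_on U (ipd xs (pd i h)) \<and> (\<forall>j<n. \<forall>u\<in>U. (\<lambda>t. ipd xs (pd i h) (u(j := u j + t))) differentiable at 0)"
    using assms(1) unfolding smooth_on_def ipd_snoc[symmetric] by blast
qed

lemma smooth_on_imp_Ck_on: "smooth_on n U h \<Longrightarrow> Ck_on n U k h"
proof (induction k arbitrary: h)
  case 0 then show ?case using smooth_onD by simp
next
  case (Suc k)
  have a: "continuous_on U h \<and> (\<forall>i<n. \<forall>u\<in>U. (\<lambda>t. h (u(i := u i + t))) differentiable at 0)"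
    by (rule smooth_onD[OF Suc.prems])
  have b: "\<forall>i<n. Ck_on n U k (pd i h)" using Suc.IH smooth_on_pd[OF Suc.prems] by blast
  show ?case unfolding Ck_on.simps using a b by blast
qed

lemma Ck_on_ipd:
  assumes "\<forall>k. Ck_on n U k h" "set xs \<subseteq> {..<n}"
  shows "Ck_on n U k (ipd xs h)"
  using assms
proof (induction xs arbitrary: h rule: rev_induct)
  case (snoc i xs)
  then have "\<forall>k. Ck_on n U k (pd i h)" by (metis Ck_on.simps(2) in_set_conv_decomp lessThan_iff subsetD)
  then show ?case using snoc by (simp add: ipd_snoc)
qed simp

lemma Ck_on_imp_smooth_on: "\<forall>k. Ck_on n U k h \<Longrightarrow> smooth_on n U h"
  unfolding smooth_on_def using Ck_on_ipd[where k = 1] by simp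

lemma Ck_on_SucD: "Ck_on n U (Suc k) h \<Longrightarrow> Ck_on n U k h"
  by (induction k arbitrary: h) auto

lemma Ck_on_cong:
  assumes U: "openR n U"
  shows "Ck_on n U k h \<Longrightarrow> (\<forall>u\<in>U. h u = h' u) \<Longrightarrow> Ck_on n U k h'"
proof (induction k arbitrary: h h')
  case 0 then show ?case using continuous_on_eq by fastforce
next
  case (Suc k)
  have c: "continuous_on U h'" using Suc.prems continuous_on_eq by fastforce
  have hd: "\<forall>i<n. \<forall>u\<in>U. (\<lambda>t. h (u(i := u i + t))) differentiable at 0"
    using Suc.prems(1) unfolding Ck_on.simps by blast
  have d: "\<forall>i<n. \<forall>u\<in>U. (\<lambda>t. h' (u(i := u i + t))) differentiable at 0"
  proof (intro allI impI ballI)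
    fix i u assume "i < n" "u \<in> U"
    show "(\<lambda>t. h' (u(i := u i + t))) differentiable at 0"
      by (rule differentiable_coordinate_line_cong[OF U \<open>u \<in> U\<close> \<open>i < n\<close> Suc.prems(2)]) (use hd \<open>i < n\<close> \<open>u \<in> U\<close> in blast)
  qed
  have p: "\<forall>i<n. Ck_on n U k (pd i h')"
  proof (intro allI impI)
    fix i assume "i < n"
    then have "\<forall>u\<in>U. pd i h u = pd i h' u" using pd_cong[OF U] Suc.prems by blast
    moreover have "Ck_on n U k (pd i h)" using Suc.prems \<open>i<n\<close> by simp
    ultimately show "Ck_on n U k (pd i h')" using Suc.IH by blast
  qed
  show ?case using c d p by simp
qed

lemma pd_const: "pd i (\<lambda>u. a) = (\<lambda>u. 0)"
  unfolding pd_def by (rule ext) (rule DERIV_imp_deriv, rule DERIV_const)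

lemma Ck_on_const: "Ck_on n U k (\<lambda>u. a)"
  by (induction k arbitrary: a) (simp_all add: pd_const)

lemma pd_add:
  fixes a b :: "pt \<Rightarrow> real"
  assumes "(\<lambda>t. a (u(i := u i + t))) differentiable at 0" "(\<lambda>t. b (u(i := u i + t))) differentiable at 0"
  shows "pd i (\<lambda>u. a u + b u) u = pd i a u + pd i b u"
proof -
  have "((\<lambda>t. a (u(i := u i + t)) + b (u(i := u i + t))) has_real_derivative pd i a u + pd i b u) (at 0)"
    by (rule DERIV_add) (rule has_real_derivative_pd, fact)+
  then show ?thesis unfolding pd_def[of i "\<lambda>u. a u + b u"] by (rule DERIV_imp_deriv)
qed

lemma pd_mult:
  fixes a b :: "pt \<Rightarrow> real"
  assumes "(\<lambda>t. a (u(i := u i + t))) differentiable at 0" "(\<lambda>t. b (u(i := u i + t))) differentiable at 0"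
  shows "pd i (\<lambda>u. a u * b u) u = pd i a u * b u + pd i b u * a u"
    and "(\<lambda>t. a (u(i := u i + t)) * b (u(i := u i + t))) differentiable at 0"
proof -
  have "((\<lambda>t. a (u(i := u i + t)) * b (u(i := u i + t))) has_real_derivative
      pd i a u * b (u(i := u i + 0)) + pd i b u * a (u(i := u i + 0))) (at 0)"
    by (rule DERIV_mult) (rule has_real_derivative_pd, fact)+
  then have D: "((\<lambda>t. a (u(i := u i + t)) * b (u(i := u i + t))) has_real_derivative
      pd i a u * b u + pd i b u * a u) (at 0)" by simp
  then show "pd i (\<lambda>u. a u * b u) u = pd i a u * b u + pd i b u * a u"
    unfolding pd_def[of i "\<lambda>u. a u * b u"] by (rule DERIV_imp_deriv)
  show "(\<lambda>t. a (u(i := u i + t)) * b (u(i := u i + t))) differentiable at 0"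
    using D real_differentiable_def by blast
qed

lemma Ck_on_add:
  assumes U: "openR n U"
  shows "Ck_on n U k a \<Longrightarrow> Ck_on n U k b \<Longrightarrow> Ck_on n U k (\<lambda>u. a u + b u)"
proof (induction k arbitrary: a b)
  case 0 then show ?case by (simp add: continuous_on_add)
next
  case (Suc k)
  have p: "Ck_on n U k (pd i (\<lambda>u. a u + b u))" if "i < n" for i
  proof -
    have "Ck_on n U k (\<lambda>u. pd i a u + pd i b u)" using Suc that by simp
    moreover have "\<forall>u\<in>U. pd i a u + pd i b u = pd i (\<lambda>u. a u + b u) u"
      using Suc.prems that pd_add by simp
    ultimately show ?thesis using Ck_on_cong[OF U] by blast
  qed
  show ?case using Suc.prems p by (simp add: continuous_on_add)
qed

lemma Ck_on_mult:
  assumes U: "openR n U"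
  shows "Ck_on n U k a \<Longrightarrow> Ck_on n U k b \<Longrightarrow> Ck_on n U k (\<lambda>u. a u * b u)"
proof (induction k arbitrary: a b)
  case 0 then show ?case by (simp add: continuous_on_mult)
next
  case (Suc k)
  have ka: "Ck_on n U k a" and kb: "Ck_on n U k b" using Suc.prems Ck_on_SucD by blast+
  have p: "Ck_on n U k (pd i (\<lambda>u. a u * b u))" if "i < n" for i
  proof -
    have "Ck_on n U k (\<lambda>u. pd i a u * b u)" using Suc.IH Suc.prems that kb by simp
    moreover have "Ck_on n U k (\<lambda>u. pd i b u * a u)" using Suc.IH Suc.prems that ka by simp
    ultimately have "Ck_on n U k (\<lambda>u. pd i a u * b u + pd i b u * a u)" using Ck_on_add[OF U] by blast
    moreover have "\<forall>u\<in>U. pd i a u * b u + pd i b u * a u = pd i (\<lambda>u. a u * b u) u"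
      using Suc.prems that pd_mult(1) by simp
    ultimately show ?thesis using Ck_on_cong[OF U] by blast
  qed
  have d: "\<forall>i<n. \<forall>u\<in>U. (\<lambda>t. a (u(i := u i + t)) * b (u(i := u i + t))) differentiable at 0"
    using Suc.prems pd_mult(2) by simp
  show ?case using Suc.prems p d by (simp add: continuous_on_mult)
qed

lemma Ck_on_sum:
  assumes U: "openR n U" and S: "finite S"
  shows "(\<forall>j\<in>S. Ck_on n U k (f j)) \<Longrightarrow> Ck_on n U k (\<lambda>u. \<Sum>j\<in>S. f j u)"
  using S
proof (induction S rule: finite_induct)
  case empty then show ?case using Ck_on_const by simp
next
  case (insert x F)
  then show ?case using Ck_on_add[OF U, of k "f x" "\<lambda>u. \<Sum>j\<in>F. f j u"] by simp
qed

lemma continuous_on_smooth_components: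
  assumes "U \<subseteq> euclid n" "\<forall>j<n. smooth_on m V (\<lambda>u. f u j)" "\<forall>u\<in>V. f u \<in> U"
  shows "continuous_on V f"
proof (rule continuous_on_coordinatewise_then_product)
  fix j show "continuous_on V (\<lambda>u. f u j)"
  proof (cases "j < n")
    case True then show ?thesis using assms(2) smooth_onD by blast
  next
    case False
    then have "\<forall>u\<in>V. f u j = 0" using assms(1,3) by (auto simp: euclid_def)
    then show ?thesis using continuous_on_eq[of V "\<lambda>u. 0::real" "\<lambda>u. f u j"] by simp
  qed
qed

lemma continuous_on_comp_smooth:
  assumes U: "openR n U" and f: "\<forall>j<n. smooth_on m V (\<lambda>u. f u j)" and fV: "\<forall>u\<in>V. f u \<in> U"
    and g: "continuous_on U g"
  shows "continuous_on V (\<lambda>u. g (f u))"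
  using continuous_on_compose2[of U g V f] continuous_on_smooth_components[OF _ f fV] U g fV
  by (auto simp: openR_def)

lemma has_real_derivative_pd_comp:
  assumes V: "openR m V" and U: "openR n U" and f: "\<forall>j<n. smooth_on m V (\<lambda>u. f u j)"
    and fV: "\<forall>u\<in>V. f u \<in> U" and g: "smooth_on n U g" and u: "u \<in> V" and i: "i < m"
  shows "((\<lambda>t. g (f (u(i := u i + t)))) has_real_derivative
            (\<Sum>j<n. pd j g (f u) * pd i (\<lambda>u. f u j) u)) (at 0)"
proof (rule chain_rule_curve[OF U, where D = "\<lambda>j. pd i (\<lambda>u. f u j) u"])
  show "f u \<in> U" using fV u by blast
  show "\<forall>j<n. \<forall>y\<in>U. (\<lambda>t. g (y(j := y j + t))) differentiable at 0" using smooth_onD[OF g] by blast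
  show "\<forall>j<n. continuous_on U (pd j g)" using smooth_onD smooth_on_pd[OF g] by blast
  show "\<forall>j<n. ((\<lambda>t. f (u(i := u i + t)) j) has_real_derivative pd i (\<lambda>u. f u j) u) (at 0)"
  proof (intro allI impI)
    fix j assume "j < n"
    then have "(\<lambda>t. f (u(i := u i + t)) j) differentiable at 0" using smooth_onD f u i by blast
    then show "((\<lambda>t. f (u(i := u i + t)) j) has_real_derivative pd i (\<lambda>u. f u j) u) (at 0)"
      using has_real_derivative_pd[of "\<lambda>u. f u j"] by simp
  qed
  show "f (u(i := u i + 0)) = f u" by simp
  have "eventually (\<lambda>t. u(i := u i + t) \<in> V) (nhds 0)" by (rule eventually_coordinate_line_in[OF V u i])
  then have "eventually (\<lambda>t. f (u(i := u i + t)) \<in> U) (nhds 0)"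
    by (rule eventually_mono) (use fV in blast)
  then show "eventually (\<lambda>t. f (u(i := u i + t)) \<in> U) (at 0)"
    unfolding eventually_at_filter by (rule eventually_mono) simp
qed

lemma pd_comp:
  assumes "openR m V" "openR n U" "\<forall>j<n. smooth_on m V (\<lambda>u. f u j)"
    and "\<forall>u\<in>V. f u \<in> U" "smooth_on n U g" "u \<in> V" "i < m"
  shows "pd i (\<lambda>u. g (f u)) u = (\<Sum>j<n. pd j g (f u) * pd i (\<lambda>u. f u j) u)"
  unfolding pd_def[of i "\<lambda>u. g (f u)"]
  using DERIV_imp_deriv[OF has_real_derivative_pd_comp[OF assms]] by simp

lemma Ck_on_comp:
  assumes V: "openR m V" and U: "openR n U" and f: "\<forall>j<n. smooth_on m V (\<lambda>u. f u j)"
    and fV: "\<forall>u\<in>V. f u \<in> U"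
  shows "smooth_on n U g \<Longrightarrow> Ck_on m V k (\<lambda>u. g (f u))"
proof (induction k arbitrary: g)
  case 0 then show ?case using continuous_on_comp_smooth[OF U f fV smooth_onD[OF 0, THEN conjunct1]] by simp
next
  case (Suc k)
  have c: "continuous_on V (\<lambda>u. g (f u))" using continuous_on_comp_smooth[OF U f fV] smooth_onD Suc.prems by blast
  have d: "\<forall>i<m. \<forall>u\<in>V. (\<lambda>t. g (f (u(i := u i + t)))) differentiable at 0"
    using has_real_derivative_pd_comp[OF V U f fV Suc.prems] real_differentiable_def by blast
  have p: "Ck_on m V k (pd i (\<lambda>u. g (f u)))" if i: "i < m" for i
  proof -
    have "Ck_on m V k (\<lambda>u. \<Sum>j<n. pd j g (f u) * pd i (\<lambda>u. f u j) u)"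
    proof (rule Ck_on_sum[OF V], simp, intro ballI)
      fix j assume "j \<in> {..<n}"
      then have j: "j < n" by simp
      have "Ck_on m V k (\<lambda>u. pd j g (f u))" using Suc.IH smooth_on_pd[OF Suc.prems j] by blast
      moreover have "Ck_on m V k (pd i (\<lambda>u. f u j))" using smooth_on_imp_Ck_on smooth_on_pd f j i by blast
      ultimately show "Ck_on m V k (\<lambda>u. pd j g (f u) * pd i (\<lambda>u. f u j) u)" using Ck_on_mult[OF V] by blast
    qed
    moreover have "\<forall>u\<in>V. (\<Sum>j<n. pd j g (f u) * pd i (\<lambda>u. f u j) u) = pd i (\<lambda>u. g (f u)) u"
      using pd_comp[OF V U f fV Suc.prems _ i] by simp
    ultimately show ?thesis using Ck_on_cong[OF V] by blast
  qed
  show ?case using c d p by simp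
qed

lemma smooth_on_comp:
  assumes V: "openR m V" and U: "openR n U" and f: "\<forall>j<n. smooth_on m V (\<lambda>u. f u j)"
    and fV: "\<forall>u\<in>V. f u \<in> U" and g: "smooth_on n U g"
  shows "smooth_on m V (\<lambda>u. g (f u))"
  using Ck_on_imp_smooth_on Ck_on_comp[OF V U f fV g] by blast

section \<open>Morphisms of \<open>G(X,x)\<close> and their differentials\<close>

lemma smooth_on_subset: "U' \<subseteq> U \<Longrightarrow> smooth_on n U h \<Longrightarrow> smooth_on n U' h"
  unfolding smooth_on_def by (meson continuous_on_subset subsetD)

lemma openR_preimage:
  assumes W: "openR m W" and W': "openR n W'" and f: "\<forall>j<n. smooth_on m W (\<lambda>u. f u j)"
    and fW: "\<forall>u\<in>W. f u \<in> U" and U: "U \<subseteq> euclid n" and W'U: "W' \<subseteq> U"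
  shows "openR m (W \<inter> f -` W')"
proof -
  have cont: "continuous_on W f" using continuous_on_smooth_components[OF U f fW] .
  obtain T where T: "open T" "W' = euclid n \<inter> T" using W' openR_def openin_open by metis
  then have "openin (top_of_set U) W'" using W'U U openin_open by blast
  moreover have "f ` W \<subseteq> U" using fW by blast
  ultimately have "openin (top_of_set W) (W \<inter> f -` W')"
    using continuous_openin_preimage[OF cont] by blast
  then have "openin (top_of_set (euclid m)) (W \<inter> f -` W')"
    using W openR_def openin_trans by blast
  then show ?thesis using W openR_def by blast
qed

lemma is_mor_comp:
  assumes f: "is_mor P Q W f" and g: "is_mor Q R W' g" and Q: "domo Q \<subseteq> euclid (dimo Q)"
  shows "is_mor P R (W \<inter> f -` W') (g \<circ> f)"
proof -
  define V where "V = W \<inter> f -` W'"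
  have f_smooth: "\<forall>j<dimo Q. smooth_on (dimo P) W (\<lambda>u. f u j)" and fW: "\<forall>u\<in>W. f u \<in> domo Q"
    using f unfolding is_mor_def smooth_map_def by auto
  have V: "openR (dimo P) V" unfolding V_def
    by (rule openR_preimage[OF _ _ f_smooth fW Q]) (use f g in \<open>auto simp: is_mor_def\<close>)
  have "smooth_on (dimo P) V (\<lambda>u. (g \<circ> f) u j)" if "j < dimo R" for j
  proof -
    have "smooth_on (dimo Q) W' (\<lambda>y. g y j)" using g that by (auto simp: is_mor_def smooth_map_def)
    moreover have "\<forall>j<dimo Q. smooth_on (dimo P) V (\<lambda>u. f u j)"
      using f_smooth smooth_on_subset[of V W] V_def by blast
    ultimately show ?thesis
      using smooth_on_comp[OF V, of "dimo Q" W' f] g V_def by (auto simp: is_mor_def o_def)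
  qed
  then show ?thesis using f g V unfolding is_mor_def smooth_map_def V_def by auto
qed

lemma pd_germ_cong:
  assumes "germ_eq n W f W' f'" "i < n"
  shows "pd i (\<lambda>u. f u j) 0 = pd i (\<lambda>u. f' u j) 0"
proof -
  obtain W'' where W'': "openR n W''" "0 \<in> W''" "\<forall>w\<in>W''. f w = f' w"
    using assms(1) unfolding germ_eq_def by blast
  show ?thesis by (rule pd_cong[OF W''(1) W''(2) assms(2)]) (use W''(3) in simp)
qed

lemma diff0_apply:
  "j < m \<Longrightarrow> diff0 n m f v j = (\<Sum>i<n. pd i (\<lambda>u. f u j) 0 * v i)"
  "\<not> j < m \<Longrightarrow> diff0 n m f v j = 0"
  by (simp_all add: diff0_def)

lemma diff0_germ_cong:
  assumes "germ_eq n W f W' f'"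
  shows "diff0 n m f v = diff0 n m f' v"
  unfolding diff0_def using pd_germ_cong[OF assms] by (intro ext if_cong sum.cong) auto

lemma diff0_comp_jacobian:
  assumes "\<And>i j. i < n \<Longrightarrow> j < k \<Longrightarrow>
             pd i (\<lambda>u. h u j) 0 = (\<Sum>l<m. pd l (\<lambda>y. g y j) 0 * pd i (\<lambda>u. f u l) 0)"
  shows "diff0 n k h v = diff0 m k g (diff0 n m f v)"
proof
  fix j show "diff0 n k h v j = diff0 m k g (diff0 n m f v) j"
  proof (cases "j < k")
    case True
    have "diff0 n k h v j = (\<Sum>i<n. \<Sum>l<m. pd l (\<lambda>y. g y j) 0 * (pd i (\<lambda>u. f u l) 0 * v i))"
      using True assms by (simp add: diff0_apply sum_distrib_right mult.assoc)
    also have "\<dots> = (\<Sum>l<m. pd l (\<lambda>y. g y j) 0 * (\<Sum>i<n. pd i (\<lambda>u. f u l) 0 * v i))"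
      by (subst sum.swap) (simp add: sum_distrib_left)
    also have "\<dots> = diff0 m k g (diff0 n m f v) j"
      using True by (simp add: diff0_apply)
    finally show ?thesis .
  qed (simp add: diff0_apply)
qed

lemma diff0_comp:
  assumes f: "is_mor P Q W f" and g: "is_mor Q R W' g" and Q: "domo Q \<subseteq> euclid (dimo Q)"
  shows "diff0 (dimo P) (dimo R) (g \<circ> f) v = diff0 (dimo Q) (dimo R) g (diff0 (dimo P) (dimo Q) f v)"
proof (rule diff0_comp_jacobian)
  fix i j assume i: "i < dimo P" and j: "j < dimo R"
  define V where "V = W \<inter> f -` W'"
  have V: "openR (dimo P) V" "0 \<in> V"
    using is_mor_comp[OF f g Q] unfolding V_def is_mor_def by auto
  have "\<forall>l<dimo Q. smooth_on (dimo P) V (\<lambda>u. f u l)"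
    using f smooth_on_subset[of V W] unfolding V_def is_mor_def smooth_map_def by auto
  moreover have "smooth_on (dimo Q) W' (\<lambda>y. g y j)" "openR (dimo Q) W'"
    using g j unfolding is_mor_def smooth_map_def by auto
  moreover have "f 0 = 0" using f by (simp add: is_mor_def)
  ultimately show "pd i (\<lambda>u. (g \<circ> f) u j) 0 = (\<Sum>l<dimo Q. pd l (\<lambda>y. g y j) 0 * pd i (\<lambda>u. f u l) 0)"
    using pd_comp[OF V(1), of "dimo Q" W' f "\<lambda>y. g y j" 0 i] V(2) i by (simp add: V_def o_def)
qed

lemma pd_coordinate: "pd i (\<lambda>u. u j) y = (if i = j then 1 else 0)"
proof -
  have "((\<lambda>t. (y(i := y i + t)) j) has_real_derivative (if i = j then 1 else 0)) (at 0)"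
    by (cases "i = j") (auto intro!: derivative_eq_intros)
  then show ?thesis unfolding pd_def by (rule DERIV_imp_deriv)
qed

lemma diff0_id: "v \<in> euclid n \<Longrightarrow> diff0 n n id v = v"
  by (auto simp: diff0_def pd_coordinate euclid_def fun_eq_iff mult_delta_left)

section \<open>Direct sums and quotients\<close>

lemma sum_fun_apply: "(\<Sum>i\<in>S. f i) x = (\<Sum>i\<in>S. f i x)"
  by (induction S rule: infinite_finite_induct) auto

lemma scaleR_fun_apply: "(a *\<^sub>R f) x = a *\<^sub>R f x"
  by (simp add: scaleR_fun_def)

lemma subspace_euclid: "subspace (euclid n)"
  by (auto simp: subspace_def euclid_def scaleR_fun_apply)

lemma linear_diff0: "linear (diff0 n m f)"
  by (rule linearI) (auto simp: diff0_def fun_eq_iff scaleR_fun_apply algebra_simps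
      sum.distrib sum_distrib_left)

lemma diff0_in_euclid: "diff0 n m f v \<in> euclid m"
  by (simp add: diff0_def euclid_def)

lemma linear_inj_ds: "linear (inj_ds P)"
  by (rule linearI) (auto simp: inj_ds_def fun_eq_iff scaleR_fun_apply)

lemma coset_eq:
  assumes R: "subspace R" and "a - b \<in> R"
  shows "coset a R = coset b R"
proof -
  have "coset a R \<subseteq> coset b R" if "a - b \<in> R" for a b
  proof
    fix x assume "x \<in> coset a R"
    then obtain r where "r \<in> R" "x = b + ((a - b) + r)" by (auto simp: coset_def)
    then show "x \<in> coset b R" using R that subspace_add unfolding coset_def by blast
  qed
  moreover have "b - a \<in> R" using assms subspace_neg by fastforce
  ultimately show ?thesis using assms by blast
qed

lemma coset_self: "subspace R \<Longrightarrow> a \<in> coset a R"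
  unfolding coset_def using subspace_0 by force

lemma coset_diff: "c \<in> coset a R \<Longrightarrow> c - a \<in> R"
  by (auto simp: coset_def)

lemma coset_eq_iff: "subspace R \<Longrightarrow> coset a R = coset b R \<longleftrightarrow> a - b \<in> R"
  using coset_eq coset_self coset_diff by metis

lemma some_in_coset: "subspace R \<Longrightarrow> (SOME c. c \<in> coset a R) - a \<in> R"
  by (rule coset_diff, rule someI_ex) (use coset_self in blast)

lemma qplus_coset:
  assumes R: "subspace R"
  shows "qplus R (coset a R) (coset b R) = coset (a + b) R"
  unfolding qplus_def
proof (rule coset_eq[OF R])
  have "((SOME c. c \<in> coset a R) - a) + ((SOME c. c \<in> coset b R) - b) \<in> R"
    using R some_in_coset subspace_add by blast
  then show "(SOME c. c \<in> coset a R) + (SOME d. d \<in> coset b R) - (a + b) \<in> R"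
    by (simp add: algebra_simps)
qed

lemma qscale_coset:
  assumes R: "subspace R"
  shows "qscale R r (coset a R) = coset (r *\<^sub>R a) R"
  unfolding qscale_def
proof (rule coset_eq[OF R])
  have "r *\<^sub>R ((SOME c. c \<in> coset a R) - a) \<in> R" using R some_in_coset subspace_scale by blast
  then show "r *\<^sub>R (SOME c. c \<in> coset a R) - r *\<^sub>R a \<in> R"
    by (simp add: algebra_simps)
qed

text \<open>The map \<open>V/R \<rightarrow> V/S\<close> induced by the identity when \<open>R \<subseteq> S\<close>, defined on cosets through a
  chosen representative.\<close>
definition coset_map :: "'b::real_vector set \<Rightarrow> 'b set \<Rightarrow> 'b set" where
  "coset_map S C = coset (SOME c. c \<in> C) S"

lemma coset_map_coset:
  assumes "subspace R" "subspace S" "R \<subseteq> S"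
  shows "coset_map S (coset a R) = coset a S"
  unfolding coset_map_def by (rule coset_eq[OF assms(2)]) (use assms some_in_coset in blast)

lemma qlinear_coset_map:
  assumes "subspace R" "subspace S" "R \<subseteq> S"
  shows "qlinear R S ((\<lambda>s. coset s R) ` V) (coset_map S)"
  unfolding qlinear_def
  by (simp add: coset_map_coset[OF assms] qplus_coset qscale_coset assms)

lemma inj_on_coset_map:
  assumes R: "subspace R" and S: "subspace S" "R \<subseteq> S"
    and V: "subspace V" and VS: "\<And>u. u \<in> V \<Longrightarrow> u \<in> S \<Longrightarrow> u \<in> R"
  shows "inj_on (coset_map S) ((\<lambda>s. coset s R) ` V)"
proof (rule inj_onI, clarify)
  fix s t assume "s \<in> V" "t \<in> V" "coset_map S (coset s R) = coset_map S (coset t R)"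
  then have "s - t \<in> V" "s - t \<in> S"
    using V subspace_diff coset_eq_iff[OF S(1)] coset_map_coset[OF R S] by auto
  then show "coset s R = coset t R" using VS coset_eq[OF R] by blast
qed

lemma dsumD:
  assumes "s \<in> dsum I"
  shows "finite {P. s P \<noteq> 0}" "\<And>P. s P \<noteq> 0 \<Longrightarrow> P \<in> I" "\<And>P. P \<in> I \<Longrightarrow> s P \<in> euclid (dimo P)"
  using assms unfolding dsum_def by blast+

lemma dsumI:
  assumes "finite {P. s P \<noteq> 0}" "\<And>P. s P \<noteq> 0 \<Longrightarrow> P \<in> I" "\<And>P. P \<in> I \<Longrightarrow> s P \<in> euclid (dimo P)"
  shows "s \<in> dsum I"
  using assms unfolding dsum_def by blast

lemma subspace_dsum: "subspace (dsum I)"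
  unfolding subspace_def
proof (intro conjI ballI allI)
  show "0 \<in> dsum I" by (rule dsumI) (simp_all add: subspace_0[OF subspace_euclid])
next
  fix s t assume s: "s \<in> dsum I" and t: "t \<in> dsum I"
  show "s + t \<in> dsum I"
  proof (rule dsumI)
    have "{P. (s + t) P \<noteq> 0} \<subseteq> {P. s P \<noteq> 0} \<union> {P. t P \<noteq> 0}" by auto
    then show "finite {P. (s + t) P \<noteq> 0}"
      using dsumD(1)[OF s] dsumD(1)[OF t] by (meson finite_UnI finite_subset)
  next
    fix P assume "(s + t) P \<noteq> 0"
    then have "s P \<noteq> 0 \<or> t P \<noteq> 0" by auto
    then show "P \<in> I" using dsumD(2)[OF s] dsumD(2)[OF t] by blast
  next
    fix P assume "P \<in> I"
    then show "(s + t) P \<in> euclid (dimo P)"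
      using dsumD(3)[OF s] dsumD(3)[OF t] subspace_add[OF subspace_euclid] by simp
  qed
next
  fix c :: real and s assume s: "s \<in> dsum I"
  show "c *\<^sub>R s \<in> dsum I"
  proof (rule dsumI)
    have "{P. (c *\<^sub>R s) P \<noteq> 0} \<subseteq> {P. s P \<noteq> 0}" by (auto simp: scaleR_fun_apply)
    then show "finite {P. (c *\<^sub>R s) P \<noteq> 0}" using dsumD(1)[OF s] by (rule finite_subset)
  next
    fix P assume "(c *\<^sub>R s) P \<noteq> 0"
    then show "P \<in> I" using dsumD(2)[OF s] by (auto simp: scaleR_fun_apply)
  next
    fix P assume "P \<in> I"
    then show "(c *\<^sub>R s) P \<in> euclid (dimo P)"
      using dsumD(3)[OF s] subspace_scale[OF subspace_euclid] by (simp add: scaleR_fun_apply)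
  qed
qed

lemma finite_support_inj_ds: "finite {Q. inj_ds P v Q \<noteq> 0}"
  by (rule finite_subset[of _ "{P}"]) (auto simp: inj_ds_def)

lemma inj_ds_in_dsum: "P \<in> I \<Longrightarrow> v \<in> euclid (dimo P) \<Longrightarrow> inj_ds P v \<in> dsum I"
  by (rule dsumI[OF finite_support_inj_ds])
    (auto simp: inj_ds_def subspace_0[OF subspace_euclid] split: if_splits)

lemma sum_inj_ds_support:
  assumes "finite {P. s P \<noteq> 0}"
  shows "(\<Sum>P | s P \<noteq> 0. inj_ds P (s P)) = s"
proof
  fix Q
  have "(\<Sum>P | s P \<noteq> 0. inj_ds P (s P)) Q = (\<Sum>P | s P \<noteq> 0. if Q = P then s P else 0)"
    by (simp add: sum_fun_apply inj_ds_def)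
  also have "\<dots> = s Q" using assms by (simp add: sum.delta')
  finally show "(\<Sum>P | s P \<noteq> 0. inj_ds P (s P)) Q = s Q" .
qed

lemma dsum_subset_span_inj_ds:
  "dsum I \<subseteq> span {inj_ds P v | P v. P \<in> I \<and> v \<in> euclid (dimo P)}"
proof
  fix s assume s: "s \<in> dsum I"
  have "(\<Sum>P | s P \<noteq> 0. inj_ds P (s P)) \<in> span {inj_ds P v | P v. P \<in> I \<and> v \<in> euclid (dimo P)}"
    using dsumD[OF s] by (intro span_sum span_base) blast
  then show "s \<in> span {inj_ds P v | P v. P \<in> I \<and> v \<in> euclid (dimo P)}"
    using sum_inj_ds_support[OF dsumD(1)[OF s]] by simp
qed

lemma dsum_mono:
  assumes "I \<subseteq> J"
  shows "dsum I \<subseteq> dsum J"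
proof
  fix s assume s: "s \<in> dsum I"
  show "s \<in> dsum J"
  proof (rule dsumI)
    show "finite {P. s P \<noteq> 0}" by (rule dsumD(1)[OF s])
    show "P \<in> J" if "s P \<noteq> 0" for P using dsumD(2)[OF s] assms that by blast
    show "s P \<in> euclid (dimo P)" if "P \<in> J" for P
      using dsumD(2,3)[OF s] subspace_0[OF subspace_euclid] by (cases "s P = 0") auto
  qed
qed

lemma rels_mono: "(\<And>P Q W f. M P Q W f \<Longrightarrow> M' P Q W f) \<Longrightarrow> rels M \<subseteq> rels M'"
  unfolding rels_def by (rule span_mono) blast

lemma generator_in_rels:
  "M P Q W f \<Longrightarrow> v \<in> euclid (dimo P) \<Longrightarrow> inj_ds Q (diff0 (dimo P) (dimo Q) f v) - inj_ds P v \<in> rels M"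
  unfolding rels_def by (rule span_base) blast

lemma subspace_rels: "subspace (rels M)"
  unfolding rels_def by (rule subspace_span)

text \<open>Only meaningful for finitely supported \<open>s\<close>: over an infinite support the sum is \<open>0\<close>.\<close>
definition dsum_extend :: "('a gobj \<Rightarrow> pt \<Rightarrow> 'b::real_vector) \<Rightarrow> ('a gobj \<Rightarrow> pt) \<Rightarrow> 'b" where
  "dsum_extend l s = (\<Sum>P | s P \<noteq> 0. l P (s P))"

lemma dsum_extend_eq:
  assumes "\<And>P. linear (l P)" "finite F" "{P. s P \<noteq> 0} \<subseteq> F"
  shows "dsum_extend l s = (\<Sum>P\<in>F. l P (s P))"
  unfolding dsum_extend_def
  by (rule sum.mono_neutral_left) (use assms(2,3) linear_0[OF assms(1)] in auto)

lemma dsum_extend_add: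
  assumes l: "\<And>P. linear (l P)" and "finite {P. s P \<noteq> 0}" "finite {P. t P \<noteq> 0}"
  shows "dsum_extend l (s + t) = dsum_extend l s + dsum_extend l t"
proof -
  define F where "F = {P. s P \<noteq> 0} \<union> {P. t P \<noteq> 0}"
  have F: "finite F" using assms F_def by simp
  have "dsum_extend l (s + t) = (\<Sum>P\<in>F. l P (s P) + l P (t P))"
    by (subst dsum_extend_eq[where l = l, OF l F]) (auto simp: F_def linear_add[OF l])
  also have "\<dots> = dsum_extend l s + dsum_extend l t"
    using dsum_extend_eq[where l = l, OF l F] by (simp add: sum.distrib F_def)
  finally show ?thesis .
qed

lemma dsum_extend_scale:
  assumes l: "\<And>P. linear (l P)" and s: "finite {P. s P \<noteq> 0}"
  shows "dsum_extend l (r *\<^sub>R s) = r *\<^sub>R dsum_extend l s"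
proof -
  have "dsum_extend l (r *\<^sub>R s) = (\<Sum>P | s P \<noteq> 0. r *\<^sub>R l P (s P))"
    by (subst dsum_extend_eq[where l = l, OF l s]) (auto simp: scaleR_fun_apply linear_scale[OF l])
  then show ?thesis by (simp add: dsum_extend_def scaleR_sum_right)
qed

lemma dsum_extend_diff:
  assumes l: "\<And>P. linear (l P)" and s: "finite {P. s P \<noteq> 0}" and t: "finite {P. t P \<noteq> 0}"
  shows "dsum_extend l (s - t) = dsum_extend l s - dsum_extend l t"
proof -
  have "finite {P. ((-1) *\<^sub>R t) P \<noteq> 0}" using t by (simp add: scaleR_fun_apply)
  then have "dsum_extend l (s + (-1) *\<^sub>R t) = dsum_extend l s + dsum_extend l ((-1) *\<^sub>R t)"
    by (rule dsum_extend_add[where l = l, OF l s])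
  then show ?thesis using dsum_extend_scale[where l = l, OF l t, of "-1"] by simp
qed

lemma dsum_extend_inj_ds:
  assumes "\<And>P. linear (l P)"
  shows "dsum_extend l (inj_ds P v) = l P v"
proof -
  have "{Q. inj_ds P v Q \<noteq> 0} \<subseteq> {P}" by (auto simp: inj_ds_def)
  from dsum_extend_eq[where l = l, OF assms _ this] show ?thesis by (simp add: inj_ds_def)
qed

lemma dsum_extend_span:
  assumes R: "subspace R" and l: "\<And>P. linear (l P)"
    and B: "\<And>b. b \<in> B \<Longrightarrow> finite {P. b P \<noteq> 0} \<and> dsum_extend l b \<in> R"
    and s: "s \<in> span B"
  shows "dsum_extend l s \<in> R"
proof -
  define Z where "Z = {s. finite {P. s P \<noteq> 0} \<and> dsum_extend l s \<in> R}"
  have "subspace Z" unfolding subspace_def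
  proof (intro conjI ballI allI)
    show "0 \<in> Z" using subspace_0[OF R] by (simp add: Z_def dsum_extend_def)
  next
    fix s t assume "s \<in> Z" "t \<in> Z"
    moreover have "{P. (s + t) P \<noteq> 0} \<subseteq> {P. s P \<noteq> 0} \<union> {P. t P \<noteq> 0}" by auto
    ultimately show "s + t \<in> Z"
      using dsum_extend_add[where l = l, OF l] subspace_add[OF R] unfolding Z_def
      by (auto intro: finite_subset)
  next
    fix r :: real and s assume "s \<in> Z"
    moreover have "{P. (r *\<^sub>R s) P \<noteq> 0} \<subseteq> {P. s P \<noteq> 0}" by (auto simp: scaleR_fun_apply)
    ultimately show "r *\<^sub>R s \<in> Z"
      using dsum_extend_scale[where l = l, OF l] subspace_scale[OF R] unfolding Z_def
      by (auto intro: finite_subset)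
  qed
  then have "span B \<subseteq> Z" using B by (intro span_minimal) (auto simp: Z_def)
  then show ?thesis using s by (auto simp: Z_def)
qed

section \<open>Comparing the colimit over a local generating category with \<open>T\<^sub>x(X)\<close>\<close>

lemma subcategoryD:
  assumes "subcategory plot x Gob M"
  shows "Gob \<subseteq> Gobj plot x"
    and "M P Q W f \<Longrightarrow> P \<in> Gob \<and> Q \<in> Gob \<and> is_mor P Q W f"
    and "P \<in> Gob \<Longrightarrow> M P P (domo P) id"
  using assms unfolding subcategory_def by blast+

lemma Gobj_domo_subset_euclid: "P \<in> Gobj plot x \<Longrightarrow> domo P \<subseteq> euclid (dimo P)"
  by (auto simp: Gobj_def domo_def dimo_def openR_def)

lemma rels_subcategory_subset: "subcategory plot x Gob M \<Longrightarrow> rels M \<subseteq> rels (Gmor plot x)"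
  by (rule rels_mono) (use subcategoryD in \<open>fastforce simp: Gmor_def\<close>)

lemma dsum_congruent_to_generating_set:
  assumes lg: "local_generating_set plot x Gob" and s: "s \<in> dsum (Gobj plot x)"
  shows "\<exists>t\<in>dsum Gob. s - t \<in> rels (Gmor plot x)"
proof -
  define Z where "Z = {t + r | t r. t \<in> dsum Gob \<and> r \<in> rels (Gmor plot x)}"
  have Z: "subspace Z"
    unfolding Z_def by (rule real_vector.subspace_sums[OF subspace_dsum subspace_rels])
  have "inj_ds P v \<in> Z" if P: "P \<in> Gobj plot x" and v: "v \<in> euclid (dimo P)" for P v
  proof -
    obtain Q W f where Q: "Q \<in> Gob" and f: "Gmor plot x P Q W f"
      using lg P unfolding local_generating_set_def by blast
    define w where "w = diff0 (dimo P) (dimo Q) f v"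
    have "inj_ds Q w \<in> dsum Gob"
      unfolding w_def by (rule inj_ds_in_dsum[OF Q diff0_in_euclid])
    moreover have "inj_ds P v - inj_ds Q w \<in> rels (Gmor plot x)"
      using subspace_neg[OF subspace_rels generator_in_rels[where M = "Gmor plot x", OF f v]]
      unfolding w_def by (simp only: minus_diff_eq)
    ultimately have "inj_ds Q w + (inj_ds P v - inj_ds Q w) \<in> Z" unfolding Z_def by blast
    then show ?thesis by simp
  qed
  then have "span {inj_ds P v | P v. P \<in> Gobj plot x \<and> v \<in> euclid (dimo P)} \<subseteq> Z"
    by (intro span_minimal[OF _ Z]) blast
  then have "s \<in> Z" using dsum_subset_span_inj_ds s by blast
  then obtain t r where "t \<in> dsum Gob" "r \<in> rels (Gmor plot x)" "s = t + r"
    unfolding Z_def by blast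
  then show ?thesis by (intro bexI[of _ t]) simp_all
qed

lemma tangent_space_eq_generating_set:
  assumes lg: "local_generating_set plot x Gob"
  shows "tangent_space plot x = (\<lambda>s. coset s (rels (Gmor plot x))) ` dsum Gob"
proof
  have "Gob \<subseteq> Gobj plot x" using lg unfolding local_generating_set_def by (rule conjunct1)
  then show "(\<lambda>s. coset s (rels (Gmor plot x))) ` dsum Gob \<subseteq> tangent_space plot x"
    unfolding tangent_space_def colim_def by (intro image_mono dsum_mono)
next
  show "tangent_space plot x \<subseteq> (\<lambda>s. coset s (rels (Gmor plot x))) ` dsum Gob"
  proof
    fix C assume "C \<in> tangent_space plot x"
    then obtain s where s: "s \<in> dsum (Gobj plot x)" and C: "C = coset s (rels (Gmor plot x))"
      unfolding tangent_space_def colim_def by blast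
    obtain t where t: "t \<in> dsum Gob" and st: "s - t \<in> rels (Gmor plot x)"
      using dsum_congruent_to_generating_set[OF lg s] by blast
    have "C = coset t (rels (Gmor plot x))" unfolding C by (rule coset_eq[OF subspace_rels st])
    then show "C \<in> (\<lambda>s. coset s (rels (Gmor plot x))) ` dsum Gob" using t by (rule image_eqI)
  qed
qed

definition comma_push :: "'a gobj \<Rightarrow> 'a gobj \<times> pt set \<times> (pt \<Rightarrow> pt) \<Rightarrow> pt \<Rightarrow> 'a gobj \<Rightarrow> pt" where
  "comma_push P a v = inj_ds (fst a) (diff0 (dimo P) (dimo (fst a)) (snd (snd a)) v)"

lemma linear_comma_push: "linear (comma_push P a)"
  unfolding comma_push_def using linear_compose[OF linear_diff0 linear_inj_ds] by (simp add: o_def)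

lemma comma_arr_push_diff:
  assumes sub: "subcategory plot x Gob M" and arr: "(a, b) \<in> comma_arr plot x Gob M P"
  shows "comma_push P b v - comma_push P a v \<in> rels M"
proof -
  obtain Q W f Q' W' f' where ab: "a = (Q, W, f)" "b = (Q', W', f')" by (metis prod_cases3)
  from arr obtain Wg g where Q: "Q \<in> Gob" and f: "Gmor plot x P Q W f" and g: "M Q Q' Wg g"
    and germ: "germ_eq (dimo P) (W \<inter> f -` Wg) (g \<circ> f) W' f'"
    unfolding comma_arr_def comma_obj_def ab by auto
  have "Q \<in> Gobj plot x" using subcategoryD(1)[OF sub] Q by blast
  note Q_euclid = Gobj_domo_subset_euclid[OF this]
  have f_mor: "is_mor P Q W f" using f by (simp add: Gmor_def)
  have g_mor: "is_mor Q Q' Wg g" using subcategoryD(2)[OF sub, OF g] by (elim conjE)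
  have "diff0 (dimo P) (dimo Q') f' v = diff0 (dimo P) (dimo Q') (g \<circ> f) v"
    by (rule diff0_germ_cong[OF germ, symmetric])
  also have "\<dots> = diff0 (dimo Q) (dimo Q') g (diff0 (dimo P) (dimo Q) f v)"
    by (rule diff0_comp[OF f_mor g_mor Q_euclid])
  finally have f': "diff0 (dimo P) (dimo Q') f' v
                     = diff0 (dimo Q) (dimo Q') g (diff0 (dimo P) (dimo Q) f v)" .
  have "inj_ds Q' (diff0 (dimo Q) (dimo Q') g (diff0 (dimo P) (dimo Q) f v))
        - inj_ds Q (diff0 (dimo P) (dimo Q) f v) \<in> rels M"
    by (rule generator_in_rels[where M = M, OF g diff0_in_euclid])
  then show ?thesis unfolding comma_push_def ab fst_conv snd_conv f' .
qed

lemma comma_zigzag_push_diff: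
  assumes sub: "subcategory plot x Gob M"
    and "(a, b) \<in> (comma_arr plot x Gob M P \<union> (comma_arr plot x Gob M P)\<inverse>)\<^sup>*"
  shows "comma_push P a v - comma_push P b v \<in> rels M"
  using assms(2)
proof (induction rule: rtrancl_induct)
  case base
  show ?case using subspace_0[OF subspace_rels, of M] by (simp only: diff_self)
next
  case (step b c)
  have "comma_push P b v - comma_push P c v \<in> rels M"
  proof (cases "(b, c) \<in> comma_arr plot x Gob M P")
    case True
    from subspace_neg[OF subspace_rels comma_arr_push_diff[OF sub True]]
    show ?thesis by (simp only: minus_diff_eq)
  next
    case False
    then have "(c, b) \<in> comma_arr plot x Gob M P" using step.hyps(2) by blast
    then show ?thesis by (rule comma_arr_push_diff[OF sub])
  qed
  from subspace_add[OF subspace_rels step.IH this] show ?case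
    by (simp only: add_diff_eq diff_add_cancel)
qed

lemma comma_push_precomp:
  assumes f: "Gmor plot x P Q W f" and a: "(Q', W', g) \<in> comma_obj plot x Gob Q"
  shows "(Q', W \<inter> f -` W', g \<circ> f) \<in> comma_obj plot x Gob P"
    and "comma_push P (Q', W \<inter> f -` W', g \<circ> f) v
         = comma_push Q (Q', W', g) (diff0 (dimo P) (dimo Q) f v)"
proof -
  have f': "is_mor P Q W f" and g: "is_mor Q Q' W' g" and Q: "Q \<in> Gobj plot x"
    using f a by (auto simp: Gmor_def comma_obj_def)
  note Q_euclid = Gobj_domo_subset_euclid[OF Q]
  show "(Q', W \<inter> f -` W', g \<circ> f) \<in> comma_obj plot x Gob P"
    using is_mor_comp[OF f' g Q_euclid] f a by (auto simp: comma_obj_def Gmor_def)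
  show "comma_push P (Q', W \<inter> f -` W', g \<circ> f) v = comma_push Q (Q', W', g) (diff0 (dimo P) (dimo Q) f v)"
    using diff0_comp[OF f' g Q_euclid] by (simp add: comma_push_def)
qed

lemma comma_push_id:
  assumes sub: "subcategory plot x Gob M" and P: "P \<in> Gob" and v: "v \<in> euclid (dimo P)"
  shows "(P, domo P, id) \<in> comma_obj plot x Gob P" and "comma_push P (P, domo P, id) v = inj_ds P v"
  using subcategoryD[OF sub] P diff0_id[OF v]
  by (auto simp: comma_obj_def Gmor_def comma_push_def)

lemma rels_final_subcategory:
  assumes sub: "subcategory plot x Gob M" and fin: "final_subcategory plot x Gob M"
    and u: "u \<in> dsum Gob" "u \<in> rels (Gmor plot x)"
  shows "u \<in> rels M"
proof -
  define c where "c P = (SOME a. a \<in> comma_obj plot x Gob P)" for P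
  have c: "c P \<in> comma_obj plot x Gob P" if "P \<in> Gobj plot x" for P
    using fin that some_in_eq unfolding final_subcategory_def c_def by metis
  have indep: "comma_push P a v - comma_push P (c P) v \<in> rels M"
    if "P \<in> Gobj plot x" "a \<in> comma_obj plot x Gob P" for P a v
    using fin that c comma_zigzag_push_diff[OF sub] unfolding final_subcategory_def by blast
  define l where "l P = comma_push P (c P)" for P
  have l: "linear (l P)" for P unfolding l_def by (rule linear_comma_push)
  have generator: "finite {R. b R \<noteq> 0} \<and> dsum_extend l b \<in> rels M"
    if generator: "b \<in> {inj_ds Q (diff0 (dimo P) (dimo Q) f v) - inj_ds P v |P Q W f v.
                Gmor plot x P Q W f \<and> v \<in> euclid (dimo P)}" for b
  proof -
    obtain P Q W f v where b: "b = inj_ds Q (diff0 (dimo P) (dimo Q) f v) - inj_ds P v"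
      and f: "Gmor plot x P Q W f" using generator by blast
    obtain Q' W' g where cQ: "c Q = (Q', W', g)" by (metis prod_cases3)
    have P: "P \<in> Gobj plot x" and "(Q', W', g) \<in> comma_obj plot x Gob Q"
      using f c[of Q] by (auto simp: Gmor_def cQ)
    note precomp = comma_push_precomp[OF f this(2)]
    have "l Q (diff0 (dimo P) (dimo Q) f v) - l P v
          = comma_push P (Q', W \<inter> f -` W', g \<circ> f) v - comma_push P (c P) v"
      unfolding l_def cQ precomp(2) ..
    also have "\<dots> \<in> rels M" by (rule indep[OF P precomp(1)])
    finally have "l Q (diff0 (dimo P) (dimo Q) f v) - l P v \<in> rels M" .
    moreover have "dsum_extend l b = l Q (diff0 (dimo P) (dimo Q) f v) - l P v"
      unfolding b by (simp add: dsum_extend_diff[where l = l, OF l] dsum_extend_inj_ds[where l = l, OF l]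
          finite_support_inj_ds)
    moreover have "{R. b R \<noteq> 0} \<subseteq> {P, Q}" by (auto simp: b inj_ds_def)
    ultimately show ?thesis by (auto intro: finite_subset)
  qed
  have "dsum_extend l u \<in> rels M"
    by (rule dsum_extend_span[where l = l, OF subspace_rels l generator u(2)[unfolded rels_def]])
  moreover have "u - dsum_extend l u \<in> rels M"
  proof -
    have "u - dsum_extend l u = (\<Sum>P | u P \<noteq> 0. inj_ds P (u P) - l P (u P))"
      using sum_inj_ds_support[OF dsumD(1)[OF u(1)]] by (simp add: dsum_extend_def sum_subtractf)
    also have "\<dots> \<in> rels M"
    proof (rule subspace_sum[OF subspace_rels])
      fix P assume "P \<in> {P. u P \<noteq> 0}"
      then have P: "P \<in> Gob" and v: "u P \<in> euclid (dimo P)" using dsumD[OF u(1)] by auto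
      have "P \<in> Gobj plot x" using P subcategoryD(1)[OF sub] by blast
      from indep[OF this comma_push_id(1)[OF sub P v], where v = "u P"]
      show "inj_ds P (u P) - l P (u P) \<in> rels M"
        unfolding l_def comma_push_id(2)[OF sub P v] .
    qed
    finally show ?thesis .
  qed
  ultimately show ?thesis using subspace_add[OF subspace_rels] by fastforce
qed

theorem proposition3p2:
  fixes X :: "'a set" and plot :: "nat \<Rightarrow> pt set \<Rightarrow> (pt \<Rightarrow> 'a) \<Rightarrow> bool" and x :: 'a
    and Gob :: "'a gobj set" and M :: "'a gobj \<Rightarrow> 'a gobj \<Rightarrow> pt set \<Rightarrow> (pt \<Rightarrow> pt) \<Rightarrow> bool"
  assumes "diffeology X plot" and "x \<in> X"
    and "local_generating_category plot x Gob M"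
  shows "\<exists>\<phi>. \<phi> ` colim Gob M = tangent_space plot x
            \<and> qlinear (rels M) (rels (Gmor plot x)) (colim Gob M) \<phi>
            \<and> (\<forall>P\<in>Gob. \<forall>v\<in>euclid (dimo P). \<phi> (colim_in M P v) = colim_in (Gmor plot x) P v)
            \<and> (final_subcategory plot x Gob M \<longrightarrow> bij_betw \<phi> (colim Gob M) (tangent_space plot x))"
proof -
  have sub: "subcategory plot x Gob M" and lg: "local_generating_set plot x Gob"
    using assms(3) unfolding local_generating_category_def by auto
  have RS: "subspace (rels M)" "subspace (rels (Gmor plot x))" "rels M \<subseteq> rels (Gmor plot x)"
    using subspace_rels rels_subcategory_subset[OF sub] by auto
  define \<phi> where "\<phi> = coset_map (rels (Gmor plot x))"
  have image: "\<phi> ` colim Gob M = tangent_space plot x"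
    unfolding \<phi>_def colim_def tangent_space_eq_generating_set[OF lg] image_image coset_map_coset[OF RS] ..
  moreover have "qlinear (rels M) (rels (Gmor plot x)) (colim Gob M) \<phi>"
    unfolding \<phi>_def colim_def by (rule qlinear_coset_map[OF RS])
  moreover have "\<phi> (colim_in M P v) = colim_in (Gmor plot x) P v" for P v
    unfolding \<phi>_def colim_in_def by (rule coset_map_coset[OF RS])
  moreover have "bij_betw \<phi> (colim Gob M) (tangent_space plot x)" if "final_subcategory plot x Gob M"
  proof -
    have "inj_on \<phi> (colim Gob M)" unfolding \<phi>_def colim_def
      by (rule inj_on_coset_map[OF RS subspace_dsum rels_final_subcategory[OF sub that]])
    then show ?thesis using image by (simp add: bij_betw_def)
  qed
  ultimately show ?thesis by blast
qed

end
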